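(* A lattice polytope $Q\subset\mathbb R^{\widetilde E}$ is a deformation of the polystellahedral fan $\Sigma_{\mathbf a}$ (i.e. its inner normal fan coarsens $\Sigma_{\mathbf a}$) if and only if $Q$ is a translate of $I(\pi^*(\mathrm P))$ for some polymatroid $\mathrm P$ on $E$ (of arbitrary type).
   Context: $E=\{1,\dots,m\}$, $\mathbf a\in\mathbb Z_{\ge0}^m$, $n=\sum a_i$, $\widetilde E$ an $n$-element set, $\pi:\widetilde E\to E$ with $|\pi^{-1}(i)|=a_i$, $\mathbf e_U=\sum_{j\in U}\mathbf e_j$. The polystellahedral fan $\Sigma_{\mathbf a}$ in $\mathbb R^{\widetilde E}$ has cones $\operatorname{cone}(-\mathbf e_{\widetilde E\setminus\pi^{-1}(F_1)},\dots,-\mathbf e_{\widetilde E\setminus\pi^{-1}(F_k)},\mathbf e_j:j\in I)$ for $I\subseteq\widetilde E$ and chains $F_1\subsetneq\dots\subsetneq F_k\subsetneq F_{k+1}=E$ ($k\ge0$) with $\pi^{-1}(A)\subseteq I\Rightarrow A\subseteq F_1$. A polymatroid on $E$ of arbitrary type is a submodular monotone $\operatorname{rk}_{\mathrm P}:2^E\to\mathbb Z_{\ge0}$ with $\operatorname{rk}_{\mathrm P}(\emptyset)=0$; its independence polytope is $I(\mathrm P)=\{x\in\mathbb R^E_{\ge0}:\sum_{i\in S}x_i\le\operatorname{rk}_{\mathrm P}(S)\ \forall S\subseteq E\}$. The expansion $\pi^*(\mathrm P)$ is the polymatroid on $\widetilde E$ with rank function $\operatorname{rk}_{\mathrm P}\circ\pi$;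 equivalently $I(\pi^*(\mathrm P))=p_\pi^{-1}(I(\mathrm P))\cap\mathbb R^{\widetilde E}_{\ge0}$ where $p_\pi:\mathbb R^{\widetilde E}\to\mathbb R^E$, $\mathbf e_j\mapsto\mathbf e_{\pi(j)}$. *)

theory Defs
  imports "HOL-Analysis.Analysis"
begin

text \<open>Ground sets: the expanded ground set \<open>E~\<close> is the finite type \<open>'n\<close>
  (so \<open>\<real>^E~\<close> is \<open>real^'n\<close>), the ground set \<open>E\<close> is the finite type \<open>'m\<close>,
  and \<open>\<pi> :: 'n \<Rightarrow> 'm\<close>; then \<open>a_i = |\<pi>^-1(i)|\<close>.\<close>

definition ind_vec :: "'n::finite set \<Rightarrow> real^'n" where
  "ind_vec U = (\<chi> j. if j \<in> U then 1 else 0)"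

definition cone_gen :: "(real^'n::finite) set \<Rightarrow> (real^'n) set" where
  "cone_gen S = {x. \<exists>c. (\<forall>v\<in>S. 0 \<le> c v) \<and> x = (\<Sum>v\<in>S. c v *\<^sub>R v)}"

definition proper_chain :: "'m::finite set list \<Rightarrow> bool" where
  "proper_chain Fs \<longleftrightarrow> sorted_wrt (\<subset>) Fs \<and> (\<forall>F\<in>set Fs. F \<subset> UNIV)"

definition first_flat :: "'m::finite set list \<Rightarrow> 'm set" where
  "first_flat Fs = (if Fs = [] then UNIV else hd Fs)"

definition polystellahedral_fan :: "('n::finite \<Rightarrow> 'm::finite) \<Rightarrow> (real^'n) set set" where
  "polystellahedral_fan \<pi> =
    {cone_gen ((\<lambda>F. - ind_vec (UNIV - \<pi> -` F)) ` set Fs \<union> (\<lambda>j. axis j 1) ` I)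
      | Fs I. proper_chain Fs \<and>
              (\<forall>A. \<pi> -` A \<subseteq> I \<longrightarrow> A \<subseteq> first_flat Fs)}"

definition inner_normal_cone :: "(real^'n::finite) set \<Rightarrow> (real^'n) set \<Rightarrow> (real^'n) set" where
  "inner_normal_cone Q F = {w. \<forall>x\<in>F. \<forall>y\<in>Q. w \<bullet> x \<le> w \<bullet> y}"

definition inner_normal_fan :: "(real^'n::finite) set \<Rightarrow> (real^'n) set set" where
  "inner_normal_fan Q = {inner_normal_cone Q F | F. F face_of Q \<and> F \<noteq> {}}"

definition coarsens :: "('a::real_vector) set set \<Rightarrow> 'a set set \<Rightarrow> bool" where
  "coarsens N \<Sigma> \<longleftrightarrow> (\<forall>\<sigma>\<in>\<Sigma>. \<exists>C\<in>N. \<sigma> \<subseteq> C) \<and> \<Union>N = \<Union>\<Sigma>"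

definition is_deformation_of :: "(real^'n::finite) set \<Rightarrow> (real^'n) set set \<Rightarrow> bool" where
  "is_deformation_of Q \<Sigma> \<longleftrightarrow> coarsens (inner_normal_fan Q) \<Sigma>"

definition lattice_polytope :: "(real^'n::finite) set \<Rightarrow> bool" where
  "lattice_polytope Q \<longleftrightarrow>
     (\<exists>S. finite S \<and> (\<forall>x\<in>S. \<forall>i. x $ i \<in> \<int>) \<and> Q = convex hull S)"

definition polymatroid :: "('m set \<Rightarrow> nat) \<Rightarrow> bool" where
  "polymatroid rk \<longleftrightarrow> rk {} = 0 \<and>
     (\<forall>A B. A \<subseteq> B \<longrightarrow> rk A \<le> rk B) \<and>
     (\<forall>A B. rk (A \<union> B) + rk (A \<inter> B) \<le> rk A + rk B)"

definition independence_polytope :: "('n::finite set \<Rightarrow> nat) \<Rightarrow> (real^'n) set" where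
  "independence_polytope rk =
     {x. (\<forall>i. 0 \<le> x $ i) \<and> (\<forall>S. (\<Sum>i\<in>S. x $ i) \<le> real (rk S))}"

definition expansion :: "('n \<Rightarrow> 'm) \<Rightarrow> ('m set \<Rightarrow> nat) \<Rightarrow> ('n set \<Rightarrow> nat)" where
  "expansion \<pi> rk = (\<lambda>S. rk (\<pi> ` S))"

end

(*
  A convex polytope Q is a deformation of the complete fan \<Sigma>_a exactly when, for every cone of
  \<Sigma>_a, the generators of that cone have a common minimizer on Q: the face of Q minimizing their
  sum then has an inner normal cone containing the whole cone.

  For Q = t + I(\<pi>*P) and a cone given by a chain F_1 \<subset> ... \<subset> F_k and a set I, run the greedy
  algorithm of P along an order in which the complements E - F_l are initial segments, and put the
  weight of each i \<notin> F_1 on one element of its fibre outside I; the resulting point is tight on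
  every E - F_l and vanishes on I, hence minimizes all generators.

  Conversely, the cone spanned by all e_j yields the componentwise minimum t of Q, a lattice
  point, and rk A is the maximum over Q of the sum of x_j - t_j over the fibres of A. Two-step
  chains give points maximizing two such sums at once, which makes rk submodular, and a point of
  t + I(\<pi>*rk) outside Q is impossible: the separating direction lies in some cone of \<Sigma>_a, whose
  generators have a common minimizer on Q.
*)
theory Submission
  imports Defs
begin

section \<open>Finitely generated cones and inner normal fans\<close>

lemma cone_gen_zero: "0 \<in> cone_gen S"
  unfolding cone_gen_def by (auto intro: exI[of _ "\<lambda>_. 0"])

lemma cone_gen_add: "x \<in> cone_gen S \<Longrightarrow> y \<in> cone_gen S \<Longrightarrow> x + y \<in> cone_gen S"
  unfolding cone_gen_def
proof clarify
  fix c d :: "real^'a \<Rightarrow> real"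
  assume "\<forall>v\<in>S. 0 \<le> c v" "\<forall>v\<in>S. 0 \<le> d v"
  then show "\<exists>e. (\<forall>v\<in>S. 0 \<le> e v) \<and>
      (\<Sum>v\<in>S. c v *\<^sub>R v) + (\<Sum>v\<in>S. d v *\<^sub>R v) = (\<Sum>v\<in>S. e v *\<^sub>R v)"
    by (intro exI[of _ "\<lambda>v. c v + d v"]) (simp add: sum.distrib scaleR_add_left)
qed

lemma cone_gen_scaleR: "x \<in> cone_gen S \<Longrightarrow> 0 \<le> a \<Longrightarrow> a *\<^sub>R x \<in> cone_gen S"
  unfolding cone_gen_def
proof clarify
  fix c :: "real^'a \<Rightarrow> real"
  assume "\<forall>v\<in>S. 0 \<le> c v" "0 \<le> a"
  then show "\<exists>e. (\<forall>v\<in>S. 0 \<le> e v) \<and> a *\<^sub>R (\<Sum>v\<in>S. c v *\<^sub>R v) = (\<Sum>v\<in>S. e v *\<^sub>R v)"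
    by (intro exI[of _ "\<lambda>v. a * c v"]) (simp add: scaleR_sum_right)
qed

lemma cone_gen_sum: "finite K \<Longrightarrow> (\<And>k. k \<in> K \<Longrightarrow> f k \<in> cone_gen S) \<Longrightarrow> sum f K \<in> cone_gen S"
  by (induction K rule: finite_induct) (auto simp: cone_gen_zero cone_gen_add)

lemma cone_gen_generator: "finite S \<Longrightarrow> v \<in> S \<Longrightarrow> v \<in> cone_gen S"
  unfolding cone_gen_def
  by (rule CollectI, rule exI[of _ "\<lambda>u. if u = v then 1 else 0"])
     (simp add: if_distrib[of "\<lambda>c. c *\<^sub>R _"] cong: if_cong)

lemma cone_gen_mono: "finite T \<Longrightarrow> S \<subseteq> T \<Longrightarrow> cone_gen S \<subseteq> cone_gen T"
  unfolding cone_gen_def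
proof clarify
  fix c :: "real^'a \<Rightarrow> real"
  assume "finite T" "S \<subseteq> T" "\<forall>v\<in>S. 0 \<le> c v"
  then show "\<exists>e. (\<forall>v\<in>T. 0 \<le> e v) \<and> (\<Sum>v\<in>S. c v *\<^sub>R v) = (\<Sum>v\<in>T. e v *\<^sub>R v)"
    by (intro exI[of _ "\<lambda>v. if v \<in> S then c v else 0"])
       (simp add: if_distrib[of "\<lambda>c. c *\<^sub>R _"] sum.If_cases Int_absorb1)
qed

lemma cone_gen_inner_le:
  assumes "w \<in> cone_gen S" "\<And>g. g \<in> S \<Longrightarrow> g \<bullet> y \<le> g \<bullet> z"
  shows "w \<bullet> y \<le> w \<bullet> z"
proof -
  obtain c where c: "\<forall>v\<in>S. 0 \<le> c v" "w = (\<Sum>v\<in>S. c v *\<^sub>R v)"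
    using assms(1) unfolding cone_gen_def by auto
  have "(\<Sum>v\<in>S. c v * (v \<bullet> y)) \<le> (\<Sum>v\<in>S. c v * (v \<bullet> z))"
    by (rule sum_mono) (simp add: assms(2) c(1) mult_left_mono)
  then show ?thesis by (simp add: c(2) inner_sum_left)
qed

lemma inner_ind_vec: "ind_vec X \<bullet> x = (\<Sum>j\<in>X. x $ j)"
proof -
  have "ind_vec X \<bullet> x = (\<Sum>j\<in>UNIV. if j \<in> X then x $ j else 0)"
    unfolding inner_vec_def ind_vec_def by (rule sum.cong) auto
  then show ?thesis by (simp add: sum.If_cases)
qed

definition common_minimizer :: "'a::real_inner set \<Rightarrow> 'a set \<Rightarrow> 'a \<Rightarrow> bool" where
  "common_minimizer Q G y \<longleftrightarrow> y \<in> Q \<and> (\<forall>g\<in>G. \<forall>z\<in>Q. g \<bullet> y \<le> g \<bullet> z)"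

lemma common_minimizer_translation:
  "common_minimizer ((+) t ` Q) G (t + y) \<longleftrightarrow> common_minimizer Q G y"
  unfolding common_minimizer_def by (auto simp: inner_add_right)

lemma cone_gen_in_inner_normal_fan_iff:
  fixes Q :: "(real^'n::finite) set"
  assumes "convex Q" "finite G"
  shows "(\<exists>C\<in>inner_normal_fan Q. cone_gen G \<subseteq> C) \<longleftrightarrow> (\<exists>y. common_minimizer Q G y)"
proof
  assume "\<exists>C\<in>inner_normal_fan Q. cone_gen G \<subseteq> C"
  then obtain F where F: "F face_of Q" "F \<noteq> {}" "cone_gen G \<subseteq> inner_normal_cone Q F"
    unfolding inner_normal_fan_def by blast
  then obtain y where "y \<in> F" by blast
  then have "common_minimizer Q G y"
    using F face_of_imp_subset cone_gen_generator[OF assms(2)]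
    unfolding common_minimizer_def inner_normal_cone_def by blast
  then show "\<exists>y. common_minimizer Q G y" ..
next
  assume "\<exists>y. common_minimizer Q G y"
  then obtain y where y: "y \<in> Q" and min: "\<And>g z. g \<in> G \<Longrightarrow> z \<in> Q \<Longrightarrow> g \<bullet> y \<le> g \<bullet> z"
    unfolding common_minimizer_def by blast
  \<comment> \<open>The face minimizing the sum of the generators minimizes each generator.\<close>
  define F where "F = Q \<inter> {x. (\<Sum>G) \<bullet> x = (\<Sum>G) \<bullet> y}"
  have "F face_of Q"
    unfolding F_def using \<open>convex Q\<close>
    by (rule face_of_Int_supporting_hyperplane_ge) (auto simp: inner_sum_left intro: sum_mono min)
  moreover have "F \<noteq> {}" using y unfolding F_def by blast
  moreover have "cone_gen G \<subseteq> inner_normal_cone Q F"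
  proof (clarsimp simp: inner_normal_cone_def)
    fix w x z assume w: "w \<in> cone_gen G" and x: "x \<in> F" and z: "z \<in> Q"
    have sum_zero: "(\<Sum>g\<in>G. g \<bullet> x - g \<bullet> y) = 0"
      using x unfolding F_def by (simp add: sum_subtractf inner_sum_left)
    have nonneg: "0 \<le> g \<bullet> x - g \<bullet> y" if "g \<in> G" for g
      using min x that unfolding F_def by auto
    show "w \<bullet> x \<le> w \<bullet> z"
    proof (rule cone_gen_inner_le[OF w])
      fix g assume "g \<in> G"
      then have "g \<bullet> x = g \<bullet> y"
        using sum_nonneg_eq_0_iff[OF assms(2) nonneg] sum_zero by simp
      then show "g \<bullet> x \<le> g \<bullet> z" using min[OF \<open>g \<in> G\<close> z] by simp
    qed
  qed
  ultimately show "\<exists>C\<in>inner_normal_fan Q. cone_gen G \<subseteq> C"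
    unfolding inner_normal_fan_def by blast
qed

section \<open>The cones of the polystellahedral fan\<close>

definition polystellahedral_index :: "('n \<Rightarrow> 'm::finite) \<Rightarrow> 'm set list \<Rightarrow> 'n set \<Rightarrow> bool" where
  "polystellahedral_index \<pi> Fs I \<longleftrightarrow>
     proper_chain Fs \<and> (\<forall>A. \<pi> -` A \<subseteq> I \<longrightarrow> A \<subseteq> first_flat Fs)"

definition polystellahedral_gens :: "('n::finite \<Rightarrow> 'm) \<Rightarrow> 'm set list \<Rightarrow> 'n set \<Rightarrow> (real^'n) set" where
  "polystellahedral_gens \<pi> Fs I = (\<lambda>F. - ind_vec (UNIV - \<pi> -` F)) ` set Fs \<union> (\<lambda>j. axis j 1) ` I"

lemma polystellahedral_fan_eq:
  "polystellahedral_fan \<pi> =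
     {cone_gen (polystellahedral_gens \<pi> Fs I) | Fs I. polystellahedral_index \<pi> Fs I}"
  unfolding polystellahedral_fan_def polystellahedral_gens_def polystellahedral_index_def ..

lemma finite_polystellahedral_gens: "finite (polystellahedral_gens \<pi> Fs I)"
  unfolding polystellahedral_gens_def by simp

lemma neg_comp_in_cone_gen_superlevel_sets:
  fixes \<pi> :: "'n::finite \<Rightarrow> 'm::finite" and g :: "'m \<Rightarrow> real"
  assumes "\<And>i. 0 \<le> g i"
  shows "(\<chi> j. - g (\<pi> j)) \<in> cone_gen ((\<lambda>s. - ind_vec (\<pi> -` {i. s \<le> g i})) ` (range g \<inter> {0<..}))"
  using assms
proof (induction "card (range g \<inter> {0<..})" arbitrary: g rule: less_induct)
  case less
  define V where "V = range g \<inter> {0<..}"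
  let ?G = "(\<lambda>s. - ind_vec (\<pi> -` {i. s \<le> g i})) ` V"
  have "finite V" unfolding V_def by simp
  show ?case
  proof (cases "V = {}")
    case True
    then have "g i = 0" for i
      using less.prems[of i] unfolding V_def by (auto simp: less_eq_real_def)
    then have "(\<chi> j. - g (\<pi> j)) = 0" by (simp add: vec_eq_iff)
    then show ?thesis by (simp add: cone_gen_zero)
  next
    case False
    \<comment> \<open>Peel off the lowest level set and recurse on the remaining levels.\<close>
    define s0 where "s0 = Min V"
    have "s0 \<in> V" unfolding s0_def using \<open>finite V\<close> False by (rule Min_in)
    then have "0 < s0" unfolding V_def by simp
    have s0_min: "s0 \<le> g i" if "0 < g i" for i
      unfolding s0_def using \<open>finite V\<close> that by (intro Min_le) (auto simp: V_def)
    define g' where "g' i = max 0 (g i - s0)" for i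
    have level_g': "{k. s \<le> g' k} = {k. s + s0 \<le> g k}" if "0 < s" for s
      using that unfolding g'_def by auto
    have pos_g': "g i \<in> V - {s0} \<and> g' i = g i - s0" if "0 < g' i" for i
      using that \<open>0 < s0\<close> unfolding g'_def V_def by (auto simp: max_def split: if_splits)
    have "range g' \<inter> {0<..} \<subseteq> (\<lambda>s. s - s0) ` (V - {s0})"
      using pos_g' by force
    then have "card (range g' \<inter> {0<..}) \<le> card (V - {s0})"
      using \<open>finite V\<close> by (meson card_image_le card_mono finite_Diff finite_imageI order_trans)
    also have "\<dots> < card V" using \<open>finite V\<close> \<open>s0 \<in> V\<close> by (rule card_Diff1_less)
    finally have "(\<chi> j. - g' (\<pi> j)) \<in>
        cone_gen ((\<lambda>s. - ind_vec (\<pi> -` {k. s \<le> g' k})) ` (range g' \<inter> {0<..}))"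
      by (intro less.hyps) (simp_all add: V_def g'_def)
    moreover have "(\<lambda>s. - ind_vec (\<pi> -` {k. s \<le> g' k})) ` (range g' \<inter> {0<..}) \<subseteq> ?G"
    proof clarify
      fix i assume "0 < g' i"
      then have "g i \<in> V" and "g' i = g i - s0"
        using pos_g' by auto
      moreover have "{k. g' i \<le> g' k} = {k. g' i + s0 \<le> g k}"
        using level_g' \<open>0 < g' i\<close> by blast
      ultimately have "g i \<in> V" "{k. g' i \<le> g' k} = {k. g i \<le> g k}" by simp_all
      then show "- ind_vec (\<pi> -` {k. g' i \<le> g' k}) \<in> ?G" by auto
    qed
    ultimately have rest: "(\<chi> j. - g' (\<pi> j)) \<in> cone_gen ?G"
      using cone_gen_mono[OF finite_imageI[OF \<open>finite V\<close>]] by blast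
    have lowest: "- ind_vec (\<pi> -` {i. s0 \<le> g i}) \<in> cone_gen ?G"
      using \<open>finite V\<close> \<open>s0 \<in> V\<close> by (intro cone_gen_generator) auto
    have "- g k = s0 * - (if s0 \<le> g k then 1 else 0) + - g' k" for k
      using s0_min[of k] less.prems[of k] unfolding g'_def by (auto simp: less_eq_real_def)
    then have decomp: "(\<chi> j. - g (\<pi> j)) =
        s0 *\<^sub>R (- ind_vec (\<pi> -` {i. s0 \<le> g i})) + (\<chi> j. - g' (\<pi> j))"
      unfolding vec_eq_iff ind_vec_def by simp
    show ?thesis
      unfolding decomp V_def[symmetric]
      using \<open>0 < s0\<close> by (intro cone_gen_add cone_gen_scaleR lowest rest) simp
  qed
qed

lemma nonneg_vec_in_cone_gen_axes:
  fixes d :: "real^'n::finite"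
  assumes "\<And>j. 0 \<le> d $ j" "\<And>j. d $ j \<noteq> 0 \<Longrightarrow> j \<in> I"
  shows "d \<in> cone_gen ((\<lambda>j. axis j 1) ` I)"
proof -
  have "d = (\<Sum>j\<in>I. d $ j *\<^sub>R axis j 1)"
    using assms(2) by (auto simp: vec_eq_iff axis_def if_distrib[of "(*) _"] sum.delta' cong: if_cong)
  also have "\<dots> \<in> cone_gen ((\<lambda>j. axis j 1) ` I)"
    using assms(1) by (intro cone_gen_sum cone_gen_scaleR cone_gen_generator) auto
  finally show ?thesis .
qed

lemma first_flat_cases: "first_flat Fs = UNIV \<or> first_flat Fs \<in> set Fs"
  unfolding first_flat_def by simp

lemma polystellahedral_fan_covers:
  fixes \<pi> :: "'n::finite \<Rightarrow> 'm::finite" and w :: "real^'n"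
  obtains Fs I where "polystellahedral_index \<pi> Fs I" "w \<in> cone_gen (polystellahedral_gens \<pi> Fs I)"
proof -
  \<comment> \<open>Write \<open>w = d - g \<circ> \<pi>\<close> with \<open>d \<ge> 0\<close> supported on \<open>I\<close>;
    the superlevel sets of \<open>g\<close> give the flats.\<close>
  define g where "g i = Max (insert 0 ((\<lambda>j. - w $ j) ` \<pi> -` {i}))" for i
  have g_nonneg: "0 \<le> g i" for i unfolding g_def by simp
  have d_nonneg: "0 \<le> w $ j + g (\<pi> j)" for j
  proof -
    have "- w $ j \<le> g (\<pi> j)" unfolding g_def by simp
    then show ?thesis by simp
  qed
  have g_attained: "\<exists>j. \<pi> j = i \<and> g i = - w $ j" if "0 < g i" for i
  proof -
    have "g i \<in> insert 0 ((\<lambda>j. - w $ j) ` \<pi> -` {i})" unfolding g_def by (rule Max_in) auto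
    then show ?thesis using that by auto
  qed
  define I where "I = {j. w $ j + g (\<pi> j) \<noteq> 0}"
  define V where "V = range g \<inter> {0<..}"
  define Fs where "Fs = map (\<lambda>s. {i. g i < s}) (sorted_list_of_set V)"
  have "finite V" unfolding V_def by simp
  then have set_Fs: "set Fs = (\<lambda>s. {i. g i < s}) ` V" unfolding Fs_def by simp
  have "sorted_wrt (<) (sorted_list_of_set V)" by simp
  then have "sorted_wrt (\<lambda>s t. {i. g i < s} \<subset> {i. g i < t}) (sorted_list_of_set V)"
  proof (rule sorted_wrt_mono_rel[rotated])
    fix s t assume "s \<in> set (sorted_list_of_set V)" "t \<in> set (sorted_list_of_set V)" "s < t"
    moreover have "s \<in> range g"
      using \<open>s \<in> set (sorted_list_of_set V)\<close> set_sorted_list_of_set[OF \<open>finite V\<close>]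
      unfolding V_def by blast
    ultimately show "{i. g i < s} \<subset> {i. g i < t}" by auto
  qed
  then have "proper_chain Fs"
    unfolding proper_chain_def Fs_def by (auto simp: sorted_wrt_map V_def)
  moreover have "A \<subseteq> first_flat Fs" if "\<pi> -` A \<subseteq> I" for A
  proof
    fix i assume "i \<in> A"
    have "g i = 0"
    proof (rule ccontr)
      assume "g i \<noteq> 0"
      then have "0 < g i" using g_nonneg[of i] by simp
      then obtain j where j: "\<pi> j = i" "g i = - w $ j" using g_attained by blast
      then have "j \<in> I" using \<open>i \<in> A\<close> that by blast
      then show False unfolding I_def using j by simp
    qed
    with first_flat_cases[of Fs] show "i \<in> first_flat Fs"
      unfolding set_Fs V_def by fastforce
  qed
  moreover have "w \<in> cone_gen (polystellahedral_gens \<pi> Fs I)"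
  proof -
    have gens: "polystellahedral_gens \<pi> Fs I =
        (\<lambda>s. - ind_vec (\<pi> -` {i. s \<le> g i})) ` V \<union> (\<lambda>j. axis j 1) ` I"
    proof -
      have "UNIV - \<pi> -` {i. g i < s} = \<pi> -` {i. s \<le> g i}" for s by auto
      then show ?thesis unfolding polystellahedral_gens_def set_Fs image_image by simp
    qed
    have "(\<chi> j. w $ j + g (\<pi> j)) \<in> cone_gen ((\<lambda>j. axis j 1) ` I)"
      using d_nonneg by (intro nonneg_vec_in_cone_gen_axes) (auto simp: I_def)
    then have d_mem: "(\<chi> j. w $ j + g (\<pi> j)) \<in> cone_gen (polystellahedral_gens \<pi> Fs I)"
      using cone_gen_mono[OF finite_polystellahedral_gens[of \<pi> Fs I]] unfolding gens by blast
    have "(\<chi> j. - g (\<pi> j)) \<in> cone_gen ((\<lambda>s. - ind_vec (\<pi> -` {i. s \<le> g i})) ` V)"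
      unfolding V_def using g_nonneg by (rule neg_comp_in_cone_gen_superlevel_sets)
    then have g_mem: "(\<chi> j. - g (\<pi> j)) \<in> cone_gen (polystellahedral_gens \<pi> Fs I)"
      using cone_gen_mono[OF finite_polystellahedral_gens[of \<pi> Fs I]] unfolding gens by blast
    have "w = (\<chi> j. w $ j + g (\<pi> j)) + (\<chi> j. - g (\<pi> j))"
      by (simp add: vec_eq_iff)
    then show ?thesis using cone_gen_add[OF d_mem g_mem] by simp
  qed
  ultimately show ?thesis using that unfolding polystellahedral_index_def by blast
qed

lemma is_deformation_of_polystellahedral_fan_iff:
  fixes Q :: "(real^'n::finite) set" and \<pi> :: "'n \<Rightarrow> 'm::finite"
  assumes "convex Q"
  shows "is_deformation_of Q (polystellahedral_fan \<pi>) \<longleftrightarrow>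
    (\<forall>Fs I. polystellahedral_index \<pi> Fs I \<longrightarrow>
       (\<exists>y. common_minimizer Q (polystellahedral_gens \<pi> Fs I) y))"
proof -
  have "w \<in> \<Union>(polystellahedral_fan \<pi>)" for w
  proof -
    obtain Fs I where "polystellahedral_index \<pi> Fs I" "w \<in> cone_gen (polystellahedral_gens \<pi> Fs I)"
      by (rule polystellahedral_fan_covers)
    then show ?thesis unfolding polystellahedral_fan_eq by blast
  qed
  then have "is_deformation_of Q (polystellahedral_fan \<pi>) \<longleftrightarrow>
      (\<forall>\<sigma>\<in>polystellahedral_fan \<pi>. \<exists>C\<in>inner_normal_fan Q. \<sigma> \<subseteq> C)"
    unfolding is_deformation_of_def coarsens_def by blast
  also have "\<dots> \<longleftrightarrow> (\<forall>Fs I. polystellahedral_index \<pi> Fs I \<longrightarrow>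
       (\<exists>C\<in>inner_normal_fan Q. cone_gen (polystellahedral_gens \<pi> Fs I) \<subseteq> C))"
    unfolding polystellahedral_fan_eq by blast
  also have "\<dots> \<longleftrightarrow> (\<forall>Fs I. polystellahedral_index \<pi> Fs I \<longrightarrow>
       (\<exists>y. common_minimizer Q (polystellahedral_gens \<pi> Fs I) y))"
    by (simp add: cone_gen_in_inner_normal_fan_iff[OF assms finite_polystellahedral_gens])
  finally show ?thesis .
qed

section \<open>Greedy points of expanded independence polytopes\<close>

lemma polymatroid_empty: "polymatroid rk \<Longrightarrow> rk {} = 0"
  unfolding polymatroid_def by blast

lemma polymatroid_mono: "polymatroid rk \<Longrightarrow> A \<subseteq> B \<Longrightarrow> rk A \<le> rk B"
  unfolding polymatroid_def by blast

lemma polymatroid_submodular: "polymatroid rk \<Longrightarrow> rk (A \<union> B) + rk (A \<inter> B) \<le> rk A + rk B"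
  unfolding polymatroid_def by blast

definition greedy_vector :: "('a set \<Rightarrow> nat) \<Rightarrow> ('a \<Rightarrow> 'b::linorder) \<Rightarrow> 'a \<Rightarrow> real" where
  "greedy_vector rk ord i = real (rk (insert i {k. ord k < ord i})) - real (rk {k. ord k < ord i})"

lemma greedy_vector_nonneg: "polymatroid rk \<Longrightarrow> 0 \<le> greedy_vector rk ord i"
  unfolding greedy_vector_def by (simp add: polymatroid_mono subset_insertI)

lemma subset_prefix_of_max:
  fixes ord :: "'a \<Rightarrow> 'b::linorder"
  assumes "inj ord" "a \<notin> A" "\<And>k. k \<in> A \<Longrightarrow> ord k \<le> ord a"
  shows "A \<subseteq> {k. ord k < ord a}"
proof
  fix k assume "k \<in> A"
  then have "ord k \<noteq> ord a" using assms(1,2) by (metis injD)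
  then show "k \<in> {k. ord k < ord a}" using assms(3)[OF \<open>k \<in> A\<close>] by simp
qed

lemma greedy_vector_sum_le:
  assumes "polymatroid rk" "inj ord" "finite A"
  shows "(\<Sum>i\<in>A. greedy_vector rk ord i) \<le> real (rk A)"
  using \<open>finite A\<close>
proof (induction A rule: finite_ranking_induct[where f = ord])
  case empty
  then show ?case using polymatroid_empty[OF assms(1)] by simp
next
  case (insert a A)
  show ?case
  proof (cases "a \<in> A")
    case False
    let ?P = "{k. ord k < ord a}"
    have "A \<subseteq> ?P" using subset_prefix_of_max[OF assms(2) False insert.hyps(2)] .
    then have "insert a A \<union> ?P = insert a ?P" "insert a A \<inter> ?P = A" using False by auto
    then have "greedy_vector rk ord a \<le> real (rk (insert a A)) - real (rk A)"
      using polymatroid_submodular[OF assms(1), of "insert a A" ?P]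
      unfolding greedy_vector_def by simp
    then show ?thesis using insert.IH False insert.hyps(1) by simp
  qed (use insert.IH in \<open>simp add: insert_absorb\<close>)
qed

lemma greedy_vector_sum_prefix:
  assumes "polymatroid rk" "inj ord" "finite A"
    and "\<And>i k. i \<in> A \<Longrightarrow> ord k < ord i \<Longrightarrow> k \<in> A"
  shows "(\<Sum>i\<in>A. greedy_vector rk ord i) = real (rk A)"
  using \<open>finite A\<close> assms(4)
proof (induction A rule: finite_ranking_induct[where f = ord])
  case empty
  then show ?case using polymatroid_empty[OF assms(1)] by simp
next
  case (insert a A)
  show ?case
  proof (cases "a \<in> A")
    case False
    have "A \<subseteq> {k. ord k < ord a}" using subset_prefix_of_max[OF assms(2) False insert.hyps(2)] .
    moreover have "{k. ord k < ord a} \<subseteq> A" using insert.prems by blast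
    ultimately have A: "A = {k. ord k < ord a}" by blast
    then have "(\<Sum>i\<in>A. greedy_vector rk ord i) = real (rk A)"
      by (intro insert.IH) auto
    then show ?thesis using False insert.hyps(1) A unfolding greedy_vector_def by simp
  qed (use insert in \<open>simp add: insert_absorb\<close>)
qed

lemma obtain_inj_refinement:
  fixes f :: "'a::finite \<Rightarrow> nat"
  obtains g :: "'a \<Rightarrow> nat" where "inj g" "\<And>x y. f x < f y \<Longrightarrow> g x < g y"
proof -
  define N where "N = card (UNIV :: 'a set)"
  obtain b :: "'a \<Rightarrow> nat" where b: "bij_betw b UNIV {0..<N}"
    using ex_bij_betw_finite_nat[of "UNIV :: 'a set"] unfolding N_def by auto
  then have "b x < N" for x by (auto dest: bij_betwE)
  define g where "g x = f x * N + b x" for x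
  have "inj g"
  proof (rule injI)
    fix x y assume "g x = g y"
    then have "b x = b y" using \<open>b x < N\<close> \<open>b y < N\<close> unfolding g_def
      by (metis mod_mult_self3 mod_less)
    then show "x = y" using b by (auto simp: bij_betw_def dest: injD)
  qed
  moreover have "g x < g y" if "f x < f y" for x y
  proof -
    have "g x < Suc (f x) * N" using \<open>b x < N\<close> unfolding g_def by simp
    also have "\<dots> \<le> f y * N" using that by (intro mult_le_mono1) simp
    finally show ?thesis unfolding g_def by simp
  qed
  ultimately show ?thesis by (rule that)
qed

lemma proper_chain_comparable:
  "proper_chain Fs \<Longrightarrow> F \<in> set Fs \<Longrightarrow> G \<in> set Fs \<Longrightarrow> F \<subseteq> G \<or> G \<subseteq> F"
  unfolding proper_chain_def by (induction Fs) auto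

lemma first_flat_subset: "proper_chain Fs \<Longrightarrow> F \<in> set Fs \<Longrightarrow> first_flat Fs \<subseteq> F"
  by (cases Fs) (auto simp: proper_chain_def first_flat_def)

lemma proper_chain_card_containing_less:
  assumes "proper_chain Fs" "F \<in> set Fs" "i \<notin> F" "k \<in> F"
  shows "card {G \<in> set Fs. i \<in> G} < card {G \<in> set Fs. k \<in> G}"
proof (rule psubset_card_mono)
  have "k \<in> G" if "G \<in> set Fs" "i \<in> G" for G
    using proper_chain_comparable[OF assms(1,2) that(1)] assms(3,4) that(2) by blast
  then show "{G \<in> set Fs. i \<in> G} \<subset> {G \<in> set Fs. k \<in> G}"
    using assms(2-4) by blast
qed simp

lemma independence_polytope_expansion_sum_le:
  assumes "polymatroid rk" "z \<in> independence_polytope (expansion \<pi> rk)"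
  shows "(\<Sum>j\<in>\<pi> -` X. z $ j) \<le> real (rk X)"
proof -
  have "(\<Sum>j\<in>\<pi> -` X. z $ j) \<le> real (rk (\<pi> ` \<pi> -` X))"
    using assms(2) unfolding independence_polytope_def expansion_def by blast
  also have "\<dots> \<le> real (rk X)"
    using polymatroid_mono[OF assms(1), of "\<pi> ` \<pi> -` X" X] by simp
  finally show ?thesis .
qed

lemma sum_lift_along_section:
  fixes \<pi> :: "'n::finite \<Rightarrow> 'm"
  assumes "\<And>i. i \<in> U \<Longrightarrow> \<pi> (ch i) = i"
  shows "(\<Sum>j\<in>X. if j \<in> ch ` U then p (\<pi> j) else 0) = (\<Sum>i\<in>{i \<in> U. ch i \<in> X}. p i)"
proof -
  have "inj_on ch U" using assms by (metis inj_onI)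
  have "(\<Sum>j\<in>X. if j \<in> ch ` U then p (\<pi> j) else 0) = (\<Sum>j\<in>X \<inter> ch ` U. p (\<pi> j))"
    by (simp add: sum.inter_restrict)
  also have "X \<inter> ch ` U = ch ` {i \<in> U. ch i \<in> X}" by blast
  also have "(\<Sum>j\<in>ch ` {i \<in> U. ch i \<in> X}. p (\<pi> j)) = (\<Sum>i\<in>{i \<in> U. ch i \<in> X}. p (\<pi> (ch i)))"
    using inj_on_subset[OF \<open>inj_on ch U\<close>, of "{i \<in> U. ch i \<in> X}"] by (simp add: sum.reindex)
  also have "\<dots> = (\<Sum>i\<in>{i \<in> U. ch i \<in> X}. p i)" using assms by simp
  finally show ?thesis .
qed

lemma lift_along_section_in_independence_polytope_expansion:
  fixes \<pi> :: "'n::finite \<Rightarrow> 'm::finite"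
  assumes "\<And>i. i \<in> U \<Longrightarrow> \<pi> (ch i) = i" "\<And>i. 0 \<le> p i" "\<And>A. (\<Sum>i\<in>A. p i) \<le> real (rk A)"
  shows "(\<chi> j. if j \<in> ch ` U then p (\<pi> j) else 0) \<in> independence_polytope (expansion \<pi> rk)"
  unfolding independence_polytope_def expansion_def
proof (intro CollectI conjI allI)
  show "0 \<le> (\<chi> j. if j \<in> ch ` U then p (\<pi> j) else 0) $ j" for j using assms(2) by simp
  fix X :: "'n set"
  have "(\<Sum>j\<in>X. (\<chi> j. if j \<in> ch ` U then p (\<pi> j) else 0) $ j) = (\<Sum>i\<in>{i \<in> U. ch i \<in> X}. p i)"
    using sum_lift_along_section[where \<pi> = \<pi> and U = U and ch = ch, OF assms(1)] by simp
  also have "\<dots> \<le> (\<Sum>i\<in>\<pi> ` X. p i)"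
    using assms(1,2) by (intro sum_mono2) force+
  also have "\<dots> \<le> real (rk (\<pi> ` X))" by (rule assms(3))
  finally show "(\<Sum>j\<in>X. (\<chi> j. if j \<in> ch ` U then p (\<pi> j) else 0) $ j) \<le> real (rk (\<pi> ` X))" .
qed

lemma independence_polytope_expansion_tight_point:
  fixes \<pi> :: "'n::finite \<Rightarrow> 'm::finite"
  assumes "polymatroid rk" "polystellahedral_index \<pi> Fs I"
  obtains x where "x \<in> independence_polytope (expansion \<pi> rk)" "\<And>j. j \<in> I \<Longrightarrow> x $ j = 0"
    "\<And>F. F \<in> set Fs \<Longrightarrow> (\<Sum>j\<in>\<pi> -` (UNIV - F). x $ j) = real (rk (UNIV - F))"
proof -
  have chain: "proper_chain Fs" and flat: "\<And>A. \<pi> -` A \<subseteq> I \<Longrightarrow> A \<subseteq> first_flat Fs"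
    using assms(2) unfolding polystellahedral_index_def by blast+
  \<comment> \<open>A greedy order listing the complements of the flats as initial segments.\<close>
  obtain ord :: "'m \<Rightarrow> nat" where "inj ord"
    and ord: "\<And>i k. card {G \<in> set Fs. i \<in> G} < card {G \<in> set Fs. k \<in> G} \<Longrightarrow> ord i < ord k"
    using obtain_inj_refinement[of "\<lambda>i. card {G \<in> set Fs. i \<in> G}"] by blast
  define p where "p = greedy_vector rk ord"
  have p_nonneg: "0 \<le> p i" for i unfolding p_def by (rule greedy_vector_nonneg[OF assms(1)])
  define U where "U = UNIV - first_flat Fs"
  \<comment> \<open>Put the greedy weight of each \<open>i \<in> U\<close> on one element of its fibre outside \<open>I\<close>.\<close>
  have "\<exists>j. \<pi> j = i \<and> j \<notin> I" if "i \<in> U" for i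
    using flat[of "{i}"] that unfolding U_def by blast
  then obtain ch where ch: "\<And>i. i \<in> U \<Longrightarrow> \<pi> (ch i) = i \<and> ch i \<notin> I" by metis
  define x where "x = (\<chi> j. if j \<in> ch ` U then p (\<pi> j) else 0)"
  have sum_x: "(\<Sum>j\<in>X. x $ j) = (\<Sum>i\<in>{i \<in> U. ch i \<in> X}. p i)" for X
    unfolding x_def vec_lambda_beta using ch by (intro sum_lift_along_section) blast
  have "x \<in> independence_polytope (expansion \<pi> rk)"
    unfolding x_def using ch p_nonneg
    by (intro lift_along_section_in_independence_polytope_expansion)
       (auto simp: p_def intro: greedy_vector_sum_le[OF assms(1) \<open>inj ord\<close>])
  moreover have "x $ j = 0" if "j \<in> I" for j
    using ch that unfolding x_def by auto
  moreover have "(\<Sum>j\<in>\<pi> -` (UNIV - F). x $ j) = real (rk (UNIV - F))" if "F \<in> set Fs" for F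
  proof -
    have "UNIV - F \<subseteq> U" using first_flat_subset[OF chain that] unfolding U_def by blast
    then have fibre: "{i \<in> U. ch i \<in> \<pi> -` (UNIV - F)} = UNIV - F" using ch by auto
    have prefix: "k \<in> UNIV - F" if "i \<in> UNIV - F" "ord k < ord i" for i k
      using proper_chain_card_containing_less[OF chain \<open>F \<in> set Fs\<close>, of i k] ord that
      by (metis DiffD2 DiffI UNIV_I not_less_iff_gr_or_eq)
    have "(\<Sum>i\<in>UNIV - F. p i) = real (rk (UNIV - F))"
      unfolding p_def by (rule greedy_vector_sum_prefix[OF assms(1) \<open>inj ord\<close>]) (use prefix in auto)
    then show ?thesis unfolding sum_x fibre .
  qed
  ultimately show ?thesis by (rule that)
qed

lemma independence_polytope_expansion_common_minimizer:
  fixes \<pi> :: "'n::finite \<Rightarrow> 'm::finite"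
  assumes "polymatroid rk" "polystellahedral_index \<pi> Fs I"
  shows "\<exists>x. common_minimizer (independence_polytope (expansion \<pi> rk)) (polystellahedral_gens \<pi> Fs I) x"
proof -
  obtain x where x: "x \<in> independence_polytope (expansion \<pi> rk)" "\<And>j. j \<in> I \<Longrightarrow> x $ j = 0"
    "\<And>F. F \<in> set Fs \<Longrightarrow> (\<Sum>j\<in>\<pi> -` (UNIV - F). x $ j) = real (rk (UNIV - F))"
    using independence_polytope_expansion_tight_point[OF assms] by blast
  have "g \<bullet> x \<le> g \<bullet> z"
    if "g \<in> polystellahedral_gens \<pi> Fs I" "z \<in> independence_polytope (expansion \<pi> rk)" for g z
    using that(1) unfolding polystellahedral_gens_def
  proof (elim UnE imageE)
    fix F assume "F \<in> set Fs" "g = - ind_vec (UNIV - \<pi> -` F)"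
    moreover have "UNIV - \<pi> -` F = \<pi> -` (UNIV - F)" by blast
    ultimately show ?thesis
      using independence_polytope_expansion_sum_le[OF assms(1) that(2)] x(3)
      by (simp add: inner_ind_vec)
  next
    fix j assume "j \<in> I" "g = axis j 1"
    then show ?thesis
      using x(2) that(2) unfolding independence_polytope_def by (simp add: inner_axis')
  qed
  then show ?thesis using x(1) unfolding common_minimizer_def by blast
qed

section \<open>Deformations are expanded independence polytopes\<close>

lemma convex_hull_linear_max_attained:
  fixes S :: "'a::real_inner set"
  assumes "finite S" "S \<noteq> {}"
  shows "\<exists>s\<in>S. \<forall>x\<in>convex hull S. c \<bullet> x \<le> c \<bullet> s"
proof -
  have "Max ((\<bullet>) c ` S) \<in> (\<bullet>) c ` S" using assms by simp
  then obtain s where "s \<in> S" "c \<bullet> s = Max ((\<bullet>) c ` S)" by force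
  then have s: "s \<in> S" "\<And>x. x \<in> S \<Longrightarrow> c \<bullet> x \<le> c \<bullet> s" using assms(1) by simp_all
  have "convex hull S \<subseteq> {x. c \<bullet> x \<le> c \<bullet> s}"
    using s(2) by (intro hull_minimal) (auto simp: convex_halfspace_le)
  then show ?thesis using s(1) by blast
qed

locale polystellahedral_deformation =
  fixes \<pi> :: "'n::finite \<Rightarrow> 'm::finite" and Q S :: "(real^'n) set"
  assumes finite_S: "finite S"
    and integral_S: "\<And>x i. x \<in> S \<Longrightarrow> x $ i \<in> \<int>"
    and Q_hull: "Q = convex hull S"
    and common_minimizers:
      "\<And>Fs I. polystellahedral_index \<pi> Fs I \<Longrightarrow> \<exists>y. common_minimizer Q (polystellahedral_gens \<pi> Fs I) y"
begin

definition base_point :: "real^'n" where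
  "base_point = (SOME t. common_minimizer Q (range (\<lambda>j. axis j 1)) t)"

lemma base_point: "base_point \<in> Q" "\<And>z j. z \<in> Q \<Longrightarrow> base_point $ j \<le> z $ j"
proof -
  have "polystellahedral_index \<pi> [] UNIV"
    unfolding polystellahedral_index_def proper_chain_def first_flat_def by simp
  moreover have "polystellahedral_gens \<pi> [] UNIV = range (\<lambda>j. axis j 1)"
    unfolding polystellahedral_gens_def by simp
  ultimately have "\<exists>t. common_minimizer Q (range (\<lambda>j. axis j 1)) t"
    using common_minimizers by metis
  then have "common_minimizer Q (range (\<lambda>j. axis j 1)) base_point"
    unfolding base_point_def by (rule someI_ex)
  then show "base_point \<in> Q" "\<And>z j. z \<in> Q \<Longrightarrow> base_point $ j \<le> z $ j"
    unfolding common_minimizer_def by (auto simp: inner_axis')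
qed

lemma S_subset_Q: "S \<subseteq> Q"
  unfolding Q_hull by (rule hull_subset)

lemma S_nonempty: "S \<noteq> {}"
  using base_point(1) Q_hull by (metis convex_hull_empty empty_iff)

lemma linear_max_attained: "\<exists>s\<in>S. \<forall>x\<in>Q. c \<bullet> x \<le> c \<bullet> s"
  using convex_hull_linear_max_attained[OF finite_S S_nonempty, of c] Q_hull by simp

lemma base_point_integral: "base_point $ j \<in> \<int>"
proof -
  obtain s where s: "s \<in> S" "\<forall>x\<in>Q. - axis j 1 \<bullet> x \<le> - axis j 1 \<bullet> s"
    using linear_max_attained by blast
  then have "- axis j 1 \<bullet> base_point \<le> - axis j 1 \<bullet> s" using base_point(1) by blast
  then have "s $ j \<le> base_point $ j" by (simp add: inner_axis')
  moreover have "base_point $ j \<le> s $ j"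
    using base_point(2) s(1) S_subset_Q by blast
  ultimately have "base_point $ j = s $ j" by simp
  then show ?thesis using integral_S[OF s(1)] by simp
qed

definition excess :: "'m set \<Rightarrow> real^'n \<Rightarrow> real" where
  "excess A x = (\<Sum>j\<in>\<pi> -` A. x $ j - base_point $ j)"

definition max_excess :: "'m set \<Rightarrow> real" where
  "max_excess A = Max (excess A ` S)"

lemma excess_eq_inner: "excess A x = ind_vec (\<pi> -` A) \<bullet> x - (\<Sum>j\<in>\<pi> -` A. base_point $ j)"
  unfolding excess_def by (simp add: inner_ind_vec sum_subtractf)

lemma max_excess_attained: "\<exists>s\<in>S. excess A s = max_excess A"
proof -
  have "max_excess A \<in> excess A ` S" unfolding max_excess_def using finite_S S_nonempty by simp
  then show ?thesis by (metis imageE)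
qed

lemma excess_le_max_excess: "x \<in> Q \<Longrightarrow> excess A x \<le> max_excess A"
proof -
  assume "x \<in> Q"
  obtain s where "s \<in> S" "\<forall>x\<in>Q. ind_vec (\<pi> -` A) \<bullet> x \<le> ind_vec (\<pi> -` A) \<bullet> s"
    using linear_max_attained by blast
  then have "excess A x \<le> excess A s" using \<open>x \<in> Q\<close> unfolding excess_eq_inner by simp
  also have "\<dots> \<le> max_excess A" unfolding max_excess_def using \<open>s \<in> S\<close> finite_S by simp
  finally show ?thesis .
qed

lemma excess_nonneg: "x \<in> Q \<Longrightarrow> 0 \<le> excess A x"
  unfolding excess_def using base_point(2) by (simp add: sum_nonneg)

lemma excess_mono: "A \<subseteq> B \<Longrightarrow> x \<in> Q \<Longrightarrow> excess A x \<le> excess B x"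
  unfolding excess_def using base_point(2) by (intro sum_mono2) auto

lemma max_excess_integral: "max_excess A \<in> \<int>"
proof -
  obtain s where "s \<in> S" "excess A s = max_excess A" using max_excess_attained by blast
  moreover have "excess A s \<in> \<int>"
    unfolding excess_def using integral_S[OF \<open>s \<in> S\<close>] base_point_integral
    by (intro Ints_sum Ints_diff) auto
  ultimately show ?thesis by simp
qed

lemma max_excess_nonneg: "0 \<le> max_excess A"
proof -
  obtain s where "s \<in> S" "excess A s = max_excess A" using max_excess_attained by blast
  moreover have "s \<in> Q" using \<open>s \<in> S\<close> S_subset_Q by blast
  ultimately show ?thesis using excess_nonneg by metis
qed

lemma excess_modular: "excess (A \<union> B) x + excess (A \<inter> B) x = excess A x + excess B x"
  unfolding excess_def vimage_Un vimage_Int by (rule sum.union_inter) simp_all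

lemma excess_empty: "excess {} x = 0"
  unfolding excess_def by simp

lemma max_excess_empty: "max_excess {} = 0"
  unfolding max_excess_def excess_empty using S_nonempty by (simp add: image_constant_conv)

lemma excess_restrict_range: "excess (A \<inter> range \<pi>) = excess A"
proof -
  have "\<pi> -` (A \<inter> range \<pi>) = \<pi> -` A" by blast
  then show ?thesis unfolding excess_def by simp
qed

lemma max_excess_restrict_range: "max_excess (A \<inter> range \<pi>) = max_excess A"
  unfolding max_excess_def excess_restrict_range ..

lemma max_excess_mono: "A \<subseteq> B \<Longrightarrow> max_excess A \<le> max_excess B"
proof -
  assume "A \<subseteq> B"
  obtain s where "s \<in> S" "excess A s = max_excess A" using max_excess_attained by blast
  then have "max_excess A \<le> excess B s"
    using excess_mono[OF \<open>A \<subseteq> B\<close>] S_subset_Q by fastforce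
  also have "\<dots> \<le> max_excess B" using excess_le_max_excess \<open>s \<in> S\<close> S_subset_Q by blast
  finally show ?thesis .
qed

lemma excess_common_minimizer:
  assumes "common_minimizer Q (polystellahedral_gens \<pi> Fs I) y" "F \<in> set Fs"
  shows "excess (UNIV - F) y = max_excess (UNIV - F)"
proof (rule antisym)
  have "y \<in> Q" using assms(1) unfolding common_minimizer_def by blast
  then show "excess (UNIV - F) y \<le> max_excess (UNIV - F)" by (rule excess_le_max_excess)
  have "- ind_vec (UNIV - \<pi> -` F) \<in> polystellahedral_gens \<pi> Fs I"
    using assms(2) unfolding polystellahedral_gens_def by blast
  then have "- ind_vec (UNIV - \<pi> -` F) \<bullet> y \<le> - ind_vec (UNIV - \<pi> -` F) \<bullet> z" if "z \<in> Q" for z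
    using assms(1) that unfolding common_minimizer_def by blast
  moreover have "UNIV - \<pi> -` F = \<pi> -` (UNIV - F)" by blast
  ultimately have "ind_vec (\<pi> -` (UNIV - F)) \<bullet> z \<le> ind_vec (\<pi> -` (UNIV - F)) \<bullet> y" if "z \<in> Q" for z
    using that by simp
  then have "excess (UNIV - F) z \<le> excess (UNIV - F) y" if "z \<in> Q" for z
    using that unfolding excess_eq_inner by simp
  then show "max_excess (UNIV - F) \<le> excess (UNIV - F) y"
    using max_excess_attained S_subset_Q by (metis subsetD)
qed

lemma max_excess_submodular:
  "max_excess (A \<union> B) + max_excess (A \<inter> B) \<le> max_excess A + max_excess B"
proof -
  define U where "U = (A \<union> B) \<inter> range \<pi>"
  define W where "W = (A \<inter> B) \<inter> range \<pi>"
  \<comment> \<open>The flag \<open>UNIV - U \<subset> UNIV - W\<close> yields a point maximizing both excesses at once.\<close>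
  have "\<exists>y\<in>Q. excess U y = max_excess U \<and> excess W y = max_excess W"
  proof (cases "W = U \<or> W = {}")
    case True
    obtain s where "s \<in> S" "excess U s = max_excess U" using max_excess_attained by blast
    moreover have "excess W s = max_excess W"
      using True \<open>excess U s = max_excess U\<close> excess_empty max_excess_empty by auto
    ultimately show ?thesis using S_subset_Q by blast
  next
    case False
    then have "W \<subset> U" "W \<noteq> {}" unfolding U_def W_def by auto
    then have "polystellahedral_index \<pi> [UNIV - U, UNIV - W] {}"
      unfolding polystellahedral_index_def proper_chain_def first_flat_def U_def by auto
    then obtain y where y: "common_minimizer Q (polystellahedral_gens \<pi> [UNIV - U, UNIV - W] {}) y"
      using common_minimizers by blast
    then have "y \<in> Q" unfolding common_minimizer_def by blast
    moreover have "excess U y = max_excess U" "excess W y = max_excess W"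
      using excess_common_minimizer[OF y, of "UNIV - U"] excess_common_minimizer[OF y, of "UNIV - W"]
      by (simp_all add: Diff_Diff_Int)
    ultimately show ?thesis by blast
  qed
  then obtain y where "y \<in> Q" "excess U y = max_excess U" "excess W y = max_excess W" by blast
  then have "max_excess (A \<union> B) + max_excess (A \<inter> B) = excess A y + excess B y"
    using excess_modular[of A B y] max_excess_restrict_range excess_restrict_range
    unfolding U_def W_def by metis
  also have "\<dots> \<le> max_excess A + max_excess B"
    using \<open>y \<in> Q\<close> by (intro add_mono excess_le_max_excess)
  finally show ?thesis .
qed

definition excess_rank :: "'m set \<Rightarrow> nat" where
  "excess_rank A = nat \<lfloor>max_excess A\<rfloor>"

lemma real_excess_rank: "real (excess_rank A) = max_excess A"
proof -
  obtain k where "max_excess A = of_int k" using max_excess_integral by (auto elim: Ints_cases)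
  then show ?thesis unfolding excess_rank_def using max_excess_nonneg[of A] by simp
qed

lemma polymatroid_excess_rank: "polymatroid excess_rank"
  unfolding polymatroid_def
proof (intro conjI allI impI)
  show "excess_rank {} = 0" using real_excess_rank[of "{}"] max_excess_empty by simp
  show "excess_rank A \<le> excess_rank B" if "A \<subseteq> B" for A B
    using max_excess_mono[OF that] by (simp flip: real_excess_rank)
  show "excess_rank (A \<union> B) + excess_rank (A \<inter> B) \<le> excess_rank A + excess_rank B" for A B
    using max_excess_submodular[of A B] by (simp flip: real_excess_rank)
qed

lemma common_minimizer_le_translate:
  assumes "common_minimizer Q (polystellahedral_gens \<pi> Fs I) y" "g \<in> polystellahedral_gens \<pi> Fs I"
    and "z \<in> independence_polytope (expansion \<pi> excess_rank)"
  shows "g \<bullet> y \<le> g \<bullet> (base_point + z)"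
  using assms(2) unfolding polystellahedral_gens_def
proof (elim UnE imageE)
  fix F assume F: "F \<in> set Fs" "g = - ind_vec (UNIV - \<pi> -` F)"
  have "(\<Sum>j\<in>\<pi> -` (UNIV - F). z $ j) \<le> excess (UNIV - F) y"
    using independence_polytope_expansion_sum_le[OF polymatroid_excess_rank assms(3)]
    by (simp add: real_excess_rank excess_common_minimizer[OF assms(1) F(1)])
  moreover have "UNIV - \<pi> -` F = \<pi> -` (UNIV - F)" by blast
  ultimately show ?thesis
    unfolding F(2) excess_def by (simp add: inner_ind_vec sum.distrib sum_subtractf)
next
  fix j assume "j \<in> I" "g = axis j 1"
  moreover have "axis j 1 \<bullet> y \<le> axis j 1 \<bullet> base_point"
    using assms(1) base_point(1) \<open>j \<in> I\<close>
    unfolding common_minimizer_def polystellahedral_gens_def by blast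
  moreover have "0 \<le> z $ j" using assms(3) unfolding independence_polytope_def by blast
  ultimately show ?thesis by (simp add: inner_axis')
qed

lemma eq_translated_independence_polytope:
  "Q = (+) base_point ` independence_polytope (expansion \<pi> excess_rank)"
proof (intro equalityI subsetI)
  fix x assume "x \<in> Q"
  have "x - base_point \<in> independence_polytope (expansion \<pi> excess_rank)"
    unfolding independence_polytope_def expansion_def
  proof (intro CollectI conjI allI)
    show "0 \<le> (x - base_point) $ j" for j using base_point(2)[OF \<open>x \<in> Q\<close>] by simp
    fix X :: "'n set"
    have "(\<Sum>j\<in>X. (x - base_point) $ j) \<le> excess (\<pi> ` X) x"
      unfolding excess_def vector_minus_component
      using base_point(2)[OF \<open>x \<in> Q\<close>] by (intro sum_mono2) auto
    also have "\<dots> \<le> real (excess_rank (\<pi> ` X))"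
      unfolding real_excess_rank using \<open>x \<in> Q\<close> by (rule excess_le_max_excess)
    finally show "(\<Sum>j\<in>X. (x - base_point) $ j) \<le> real (excess_rank (\<pi> ` X))" .
  qed
  then show "x \<in> (+) base_point ` independence_polytope (expansion \<pi> excess_rank)"
    by (rule image_eqI[rotated]) simp
next
  fix x assume "x \<in> (+) base_point ` independence_polytope (expansion \<pi> excess_rank)"
  then obtain z where x: "x = base_point + z" and z: "z \<in> independence_polytope (expansion \<pi> excess_rank)"
    by blast
  show "x \<in> Q"
  proof (rule ccontr)
    assume "x \<notin> Q"
    have "closed Q" unfolding Q_hull using finite_S
      by (simp add: compact_imp_closed compact_convex_hull finite_imp_compact)
    then obtain a b where ab: "a \<bullet> x < b" "\<forall>y\<in>Q. b < a \<bullet> y"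
      using separating_hyperplane_closed_point[OF _ _ \<open>x \<notin> Q\<close>] Q_hull by auto
    obtain Fs I where "polystellahedral_index \<pi> Fs I" and a: "a \<in> cone_gen (polystellahedral_gens \<pi> Fs I)"
      by (rule polystellahedral_fan_covers)
    then obtain y where y: "common_minimizer Q (polystellahedral_gens \<pi> Fs I) y"
      using common_minimizers by blast
    have "a \<bullet> y \<le> a \<bullet> x"
      unfolding x using a common_minimizer_le_translate[OF y _ z] by (rule cone_gen_inner_le)
    moreover have "y \<in> Q" using y unfolding common_minimizer_def by blast
    ultimately show False using ab by fastforce
  qed
qed

end

theorem proposition2p7:
  fixes \<pi> :: "'n::finite \<Rightarrow> 'm::finite"
    and Q :: "(real^'n) set"
  assumes "lattice_polytope Q"
  shows "is_deformation_of Q (polystellahedral_fan \<pi>) \<longleftrightarrow>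
         (\<exists>rk t. polymatroid rk \<and>
             Q = (\<lambda>x. t + x) ` independence_polytope (expansion \<pi> rk))"
proof -
  obtain S where S: "finite S" "\<forall>x\<in>S. \<forall>i. x $ i \<in> \<int>" "Q = convex hull S"
    using assms unfolding lattice_polytope_def by blast
  then have "convex Q" by simp
  show ?thesis
  proof
    assume "is_deformation_of Q (polystellahedral_fan \<pi>)"
    then interpret polystellahedral_deformation \<pi> Q S
      using S is_deformation_of_polystellahedral_fan_iff[OF \<open>convex Q\<close>, of \<pi>]
      by unfold_locales auto
    show "\<exists>rk t. polymatroid rk \<and> Q = (\<lambda>x. t + x) ` independence_polytope (expansion \<pi> rk)"
      using polymatroid_excess_rank eq_translated_independence_polytope by blast
  next
    assume "\<exists>rk t. polymatroid rk \<and> Q = (\<lambda>x. t + x) ` independence_polytope (expansion \<pi> rk)"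
    then obtain rk t where "polymatroid rk" "Q = (+) t ` independence_polytope (expansion \<pi> rk)"
      by blast
    then show "is_deformation_of Q (polystellahedral_fan \<pi>)"
      unfolding is_deformation_of_polystellahedral_fan_iff[OF \<open>convex Q\<close>]
      by (metis common_minimizer_translation independence_polytope_expansion_common_minimizer)
  qed
qed

end
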